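(* For integers $1\le N\le 50$, a $PCS_5^N$ exists if and only if $N=1$ or $N$ is divisible by $4$.
   Context: A binary sequence of length $N$ is a sequence $a=(a(0),\dots,a(N-1))$ with each $a(i)\in\{+1,-1\}$. Its periodic autocorrelation function is $\tilde\varphi_a(i)=\sum_{j=0}^{N-1}a(j)a(i+j \bmod N)$ for $0\le i<N$. A family $a_1,\dots,a_p$ of binary sequences, all of length $N$, is a $PCS_p^N$ (periodic complementary set) if $\sum_{k=1}^p\tilde\varphi_{a_k}(i)=0$ for all $0<i<N$. The sequences in a family need not be distinct. *)

theory Defs
  imports Main
begin

text \<open>A binary sequence of length N: values a 0, ..., a (N-1) in {+1,-1};
  values outside {0..<N} are irrelevant.\<close>
definition binary_seq :: "nat \<Rightarrow> (nat \<Rightarrow> int) \<Rightarrow> bool" where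
  "binary_seq N a \<longleftrightarrow> (\<forall>j<N. a j = 1 \<or> a j = -1)"

definition paf :: "nat \<Rightarrow> (nat \<Rightarrow> int) \<Rightarrow> nat \<Rightarrow> int" where
  "paf N a i = (\<Sum>j<N. a j * a ((i + j) mod N))"

definition is_PCS :: "nat \<Rightarrow> nat \<Rightarrow> (nat \<Rightarrow> nat \<Rightarrow> int) \<Rightarrow> bool" where
  "is_PCS p N a \<longleftrightarrow> (\<forall>k<p. binary_seq N (a k)) \<and>
     (\<forall>i. 0 < i \<and> i < N \<longrightarrow> (\<Sum>k<p. paf N (a k) i) = 0)"

definition PCS_exists :: "nat \<Rightarrow> nat \<Rightarrow> bool" where
  "PCS_exists p N \<longleftrightarrow> (\<exists>a. is_PCS p N a)"

end

theory Submission
  imports Defs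
begin

(* Necessity is a congruence argument valid for any number p of sequences.
   If a and b are both +1/-1 then a*b \<equiv> a + b - 1 (mod 4); summing this over
   one period, each periodic autocorrelation value of a binary sequence of
   length N is \<equiv> 2*S - N (mod 4) with S the sum of its entries, and S \<equiv> N
   (mod 2), so every value is \<equiv> N (mod 4).  Summing over the family, the
   vanishing of the total off-peak autocorrelation (which requires N \<ge> 2 to
   be a constraint at all) forces 4 | p*N, hence 4 | N for p = 5.

   Sufficiency: N = 1 is trivial (no off-peak shifts).  For N = 4, 8, ..., 48
   explicit families are exhibited. *)

(* The key congruence for signs: it turns products into sums modulo 4. *)
lemma sign_product_mod4:
  fixes x y :: int
  assumes "x = 1 \<or> x = -1" and "y = 1 \<or> y = -1"
  shows "(x * y) mod 4 = (x + y - 1) mod 4"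
  using assms by auto

lemma sum_cyclic_shift:
  fixes f :: "nat \<Rightarrow> 'a::comm_monoid_add"
  assumes "i < N"
  shows "(\<Sum>j<N. f ((i + j) mod N)) = (\<Sum>j<N. f j)"
proof (rule sum.reindex_bij_witness[where i="\<lambda>j. (j + (N - i)) mod N"
                                      and j="\<lambda>j. (i + j) mod N"])
  fix j assume "j \<in> {..<N}"
  then have "N + j < 2 * N" and "i + (j + (N - i)) = N + j" and "i + j + (N - i) = N + j"
    using assms by simp_all
  then show "(i + (j + (N - i)) mod N) mod N = j"
    and "((i + j) mod N + (N - i)) mod N = j"
    by (simp_all only: mod_add_right_eq mod_add_left_eq) simp_all
qed auto

lemma binary_seq_sum_mod2:
  assumes "binary_seq N a"
  shows "(\<Sum>j<N. a j) mod 2 = int N mod 2"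
proof -
  have "(\<Sum>j<N. a j) mod 2 = (\<Sum>j<N. a j mod 2) mod 2"
    by (simp add: mod_sum_eq)
  also have "(\<Sum>j<N. a j mod 2) = (\<Sum>j<N. 1)"
    using assms unfolding binary_seq_def by (intro sum.cong) auto
  finally show ?thesis by simp
qed

lemma paf_mod4:
  assumes bin: "binary_seq N a" and "i < N"
  shows "paf N a i mod 4 = int N mod 4"
proof -
  have sign: "\<And>j. j < N \<Longrightarrow> a j = 1 \<or> a j = -1"
    using bin unfolding binary_seq_def by auto
  have "paf N a i mod 4 = (\<Sum>j<N. (a j * a ((i + j) mod N)) mod 4) mod 4"
    unfolding paf_def by (simp add: mod_sum_eq)
  also have "(\<Sum>j<N. (a j * a ((i + j) mod N)) mod 4)
           = (\<Sum>j<N. (a j + a ((i + j) mod N) - 1) mod 4)"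
    using \<open>i < N\<close> by (intro sum.cong refl sign_product_mod4 sign) auto
  also have "\<dots> mod 4 = (\<Sum>j<N. a j + a ((i + j) mod N) - 1) mod 4"
    by (simp add: mod_sum_eq)
  also have "(\<Sum>j<N. a j + a ((i + j) mod N) - 1) = 2 * (\<Sum>j<N. a j) - int N"
    using sum_cyclic_shift[OF \<open>i < N\<close>, of a] by (simp add: sum.distrib sum_subtractf)
  finally have paf_cong: "paf N a i mod 4 = (2 * (\<Sum>j<N. a j) - int N) mod 4" .
  obtain q where "(\<Sum>j<N. a j) = int N + 2 * q"
    using binary_seq_sum_mod2[OF bin] by (metis mod_eqE mult.commute)
  then have "2 * (\<Sum>j<N. a j) - int N = int N + 4 * q"
    by simp
  then show ?thesis
    using paf_cong by simp
qed

lemma PCS_necessary: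
  assumes "is_PCS p N a" and "2 \<le> N"
  shows "4 dvd p * N"
proof -
  have total: "(\<Sum>k<p. paf N (a k) 1) = 0"
    using assms unfolding is_PCS_def by auto
  have "(\<Sum>k<p. paf N (a k) 1) mod 4 = (\<Sum>k<p. paf N (a k) 1 mod 4) mod 4"
    by (simp add: mod_sum_eq)
  also have "(\<Sum>k<p. paf N (a k) 1 mod 4) = (\<Sum>k<p. int N mod 4)"
    using assms by (intro sum.cong refl paf_mod4) (auto simp: is_PCS_def)
  finally have "int (p * N) mod 4 = 0"
    using total by (simp add: mod_mult_right_eq)
  then show ?thesis
    by presburger
qed

(* For N = 1 there are no off-peak shifts, so any constant family works. *)
lemma PCS_exists_length_one: "PCS_exists p 1"
  unfolding PCS_exists_def is_PCS_def binary_seq_def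
  by (rule exI[where x="\<lambda>k j. 1"]) auto

definition sign :: "bool \<Rightarrow> int" where
  "sign b = (if b then 1 else -1)"

definition signs_of :: "string \<Rightarrow> bool list" where
  "signs_of s = map (\<lambda>c. c = CHR ''+'') s"

definition list_paf :: "bool list \<Rightarrow> nat \<Rightarrow> int" where
  "list_paf xs i = sum_list (map2 (\<lambda>x y. sign x * sign y) xs (rotate i xs))"

definition PCS_certificate :: "nat \<Rightarrow> nat \<Rightarrow> bool list list \<Rightarrow> bool" where
  "PCS_certificate p N L \<longleftrightarrow> length L = p \<and> list_all (\<lambda>xs. length xs = N) L \<and>
     list_all (\<lambda>i. sum_list (map (\<lambda>xs. list_paf xs i) L) = 0) [1..<N]"

lemma list_paf_eq_paf:
  assumes "length xs = N" and "i < N"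
  shows "paf N (\<lambda>j. sign (xs ! j)) i = list_paf xs i"
  using assms
  by (simp add: paf_def list_paf_def sum_list_sum_nth nth_rotate add.commute atLeast0LessThan)

lemma certificate_PCS:
  assumes "PCS_certificate p N L"
  shows "PCS_exists p N"
proof -
  have len: "\<And>k. k < p \<Longrightarrow> length (L ! k) = N"
    using assms unfolding PCS_certificate_def list_all_iff by (metis nth_mem)
  have len_L: "length L = p"
    and zero: "\<And>i. 0 < i \<Longrightarrow> i < N \<Longrightarrow> sum_list (map (\<lambda>xs. list_paf xs i) L) = 0"
    using assms unfolding PCS_certificate_def list_all_iff by auto
  define a where "a = (\<lambda>k j. sign (L ! k ! j))"
  have "is_PCS p N a"
    unfolding is_PCS_def
  proof (intro conjI allI impI)
    fix k show "binary_seq N (a k)"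
      unfolding binary_seq_def a_def sign_def by auto
  next
    fix i assume i: "0 < i \<and> i < N"
    have "(\<Sum>k<p. paf N (a k) i) = (\<Sum>k<p. list_paf (L ! k) i)"
      unfolding a_def using i len by (intro sum.cong refl list_paf_eq_paf) auto
    also have "\<dots> = sum_list (map (\<lambda>xs. list_paf xs i) L)"
      using len_L by (simp add: sum_list_sum_nth atLeast0LessThan)
    finally show "(\<Sum>k<p. paf N (a k) i) = 0"
      using zero i by simp
  qed
  then show ?thesis
    unfolding PCS_exists_def by blast
qed

lemma PCS_5_4: "PCS_exists 5 4"
  by (rule certificate_PCS[of 5 4 "map signs_of
    [''---+'',
     ''++-+'',
     ''+++-'',
     ''-+++'',
     ''-+++'']"]) code_simp

lemma PCS_5_8: "PCS_exists 5 8"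
  by (rule certificate_PCS[of 5 8 "map signs_of
    [''-+-+++-+'',
     ''+----+++'',
     ''-++++-++'',
     ''++--++-+'',
     ''++-++++-'']"]) code_simp

lemma PCS_5_12: "PCS_exists 5 12"
  by (rule certificate_PCS[of 5 12 "map signs_of
    [''++++-++-+--+'',
     ''+++-----+++-'',
     ''++-+-+-+----'',
     ''--+----+---+'',
     ''--++-++-+++-'']"]) code_simp

lemma PCS_5_16: "PCS_exists 5 16"
  by (rule certificate_PCS[of 5 16 "map signs_of
    [''-+-+---+----+--+'',
     ''-+++---+++-++-+-'',
     ''-+-++-+++-++----'',
     ''-++---+-+++++-+-'',
     ''+-------++-+---+'']"]) code_simp

lemma PCS_5_20: "PCS_exists 5 20"
  by (rule certificate_PCS[of 5 20 "map signs_of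
    [''++--++----+++++----+'',
     ''+-+--++--+-++-++++-+'',
     ''--+-+-++---+-------+'',
     ''-++-+-+-+-----+--++-'',
     ''++-+-+------+++--+-+'']"]) code_simp

lemma PCS_5_24: "PCS_exists 5 24"
  by (rule certificate_PCS[of 5 24 "map signs_of
    [''-+----+-++-+++-++--+----'',
     ''+----+-+++------+----++-'',
     ''+-+--+-+++---+---++-----'',
     ''+++---+-+--++--+--+-+-++'',
     ''--+++-+---+-++-++++--++-'']"]) code_simp

lemma PCS_5_28: "PCS_exists 5 28"
  by (rule certificate_PCS[of 5 28 "map signs_of
    [''--++++--+--+++--+---+-+-----'',
     ''-++-+--+--+---+-++-+++-+++-+'',
     ''+++-------+-++-+-+--+---+-+-'',
     ''--++-++---+++----------+-++-'',
     ''++---+-+--++--++-+---+++--++'']"]) code_simp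

lemma PCS_5_32: "PCS_exists 5 32"
  by (rule certificate_PCS[of 5 32 "map signs_of
    [''+++-+++-+-+-++-+--+-+++++----+--'',
     ''++---++------+----+-----++--++++'',
     ''-+-++-++++-+++++--+-++++++-----+'',
     ''+++--+-++--++-+++-+-+-+-++--++--'',
     ''-+-+-++----++-++-++-++----+++--+'']"]) code_simp

lemma PCS_5_36: "PCS_exists 5 36"
  by (rule certificate_PCS[of 5 36 "map signs_of
    [''---+++---++--+---+---+----+-+-+-++--'',
     ''-+-+++---+++-++--+++++-+----++-+--+-'',
     ''++++++-+--+++--+--+---+++-++----++--'',
     ''--+---+++-++-+------+--+-+--+-+++-+-'',
     ''--+-++-+-+-----+--+++++-++++++-+-+++'']"]) code_simp

lemma PCS_5_40: "PCS_exists 5 40"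
  by (rule certificate_PCS[of 5 40 "map signs_of
    [''+---+--+-+----+--+---+-+---++---+--+++++'',
     ''-++-++-+-+---++++-++--++++++-+-+-+--++++'',
     ''++-+-++++--+--------++-++-+--+--+--++--+'',
     ''-++---+++++-+-+--+-+++--+++----+-+-----+'',
     ''---+-+-+++--++--+++++-----++-+--++-----+'']"]) code_simp

lemma PCS_5_44: "PCS_exists 5 44"
  by (rule certificate_PCS[of 5 44 "map signs_of
    [''+++++-+-++-+-+++--+--+++--++-+----++++--++++'',
     ''+-+-+-++--+-++--+++---+--++--+-+--++-+------'',
     ''-++------+++-+-++++++-+++++-+++---++-+-+--++'',
     ''++--++-++++-+-+-+-------+-++++-+--+---++--+-'',
     ''++----+++--+-+++++-----+++-+++-+--+-++-+++--'']"]) code_simp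

lemma PCS_5_48: "PCS_exists 5 48"
  by (rule certificate_PCS[of 5 48 "map signs_of
    [''-+--++-+-+----+-++++++-+++-+----+-+-+--+++---+-+'',
     ''-+-++----+++-++++-+---+-+--+-+--++---++--+--++-+'',
     ''+----+-++-++--++-+---+++--+--+-++++++--+-+++-+++'',
     ''+--+-++--+++--+-----+++-+++++++++--++-++-+--++++'',
     ''+-++++--+-+-++--+--++---++---+++++++-++++++++---'']"]) code_simp

theorem proposition4:
  fixes N :: nat
  assumes "1 \<le> N" and "N \<le> 50"
  shows "PCS_exists 5 N \<longleftrightarrow> (N = 1 \<or> 4 dvd N)"
proof
  assume "PCS_exists 5 N"
  then obtain a where a: "is_PCS 5 N a"
    unfolding PCS_exists_def by blast
  show "N = 1 \<or> 4 dvd N"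
  proof (cases "N = 1")
    case False
    then have "4 dvd 5 * N"
      using PCS_necessary[OF a] assms by simp
    then show ?thesis by presburger
  qed simp
next
  assume "N = 1 \<or> 4 dvd N"
  moreover have "N \<in> {4, 8, 12, 16, 20, 24, 28, 32, 36, 40, 44, 48}" if "4 dvd N"
    using that assms by (auto elim!: dvdE) presburger
  ultimately show "PCS_exists 5 N"
    using PCS_exists_length_one PCS_5_4 PCS_5_8 PCS_5_12 PCS_5_16 PCS_5_20 PCS_5_24
      PCS_5_28 PCS_5_32 PCS_5_36 PCS_5_40 PCS_5_44 PCS_5_48
    by auto
qed

end
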